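(* If $T\in\mathcal{T}_3$ is a tree with $n\ge 30$ vertices, then either there is an edge $e$ of $T$ with $2\alpha(T,e)\ge n\,\bar{\alpha}(T,e)$, or there is an internal vertex $v$ of $T$ with $2\alpha(T,v)\ge n\,\bar{\alpha}(T,v)$.
   Context: A leaf is a vertex of degree at most 1; an internal vertex has degree at least 2. $\mathcal{T}_3$ is the set of finite trees with at least one internal vertex in which every internal vertex has degree at least 3. A subtree is a nonempty vertex set inducing a connected subgraph. For a vertex $v$, $\alpha(T,v)$ and $\bar{\alpha}(T,v)$ are the numbers of subtrees of $T$ containing and not containing $v$, respectively; for an edge $e$, $\alpha(T,e)$ and $\bar{\alpha}(T,e)$ are the numbers of subtrees containing and not containing $e$ (i.e. containing both endpoints of $e$, or not). *)

theory Defs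
  imports Main
begin

definition simple_graph :: "'a set \<Rightarrow> 'a set set \<Rightarrow> bool" where
  "simple_graph V E \<longleftrightarrow> finite V \<and> (\<forall>e\<in>E. \<exists>u v. e = {u, v} \<and> u \<noteq> v \<and> u \<in> V \<and> v \<in> V)"

definition adj_in :: "'a set set \<Rightarrow> 'a set \<Rightarrow> 'a \<Rightarrow> 'a \<Rightarrow> bool" where
  "adj_in E S u v \<longleftrightarrow> u \<in> S \<and> v \<in> S \<and> {u, v} \<in> E"

definition induces_connected :: "'a set set \<Rightarrow> 'a set \<Rightarrow> bool" where
  "induces_connected E S \<longleftrightarrow> (\<forall>x\<in>S. \<forall>y\<in>S. (adj_in E S)\<^sup>*\<^sup>* x y)"

definition is_tree :: "'a set \<Rightarrow> 'a set set \<Rightarrow> bool" where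
  "is_tree V E \<longleftrightarrow> simple_graph V E \<and> V \<noteq> {} \<and> induces_connected E V \<and> card E = card V - 1"

definition degree :: "'a set set \<Rightarrow> 'a \<Rightarrow> nat" where
  "degree E v = card {e\<in>E. v \<in> e}"

definition internal :: "'a set set \<Rightarrow> 'a \<Rightarrow> bool" where
  "internal E v \<longleftrightarrow> degree E v \<ge> 2"

definition in_T3 :: "'a set \<Rightarrow> 'a set set \<Rightarrow> bool" where
  "in_T3 V E \<longleftrightarrow> is_tree V E \<and> (\<exists>v\<in>V. internal E v) \<and> (\<forall>v\<in>V. internal E v \<longrightarrow> degree E v \<ge> 3)"

definition subtrees :: "'a set \<Rightarrow> 'a set set \<Rightarrow> 'a set set" where
  "subtrees V E = {S. S \<subseteq> V \<and> S \<noteq> {} \<and> induces_connected E S}"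

definition alpha_v :: "'a set \<Rightarrow> 'a set set \<Rightarrow> 'a \<Rightarrow> nat" where
  "alpha_v V E v = card {S\<in>subtrees V E. v \<in> S}"

definition alpha_bar_v :: "'a set \<Rightarrow> 'a set set \<Rightarrow> 'a \<Rightarrow> nat" where
  "alpha_bar_v V E v = card {S\<in>subtrees V E. v \<notin> S}"

definition alpha_e :: "'a set \<Rightarrow> 'a set set \<Rightarrow> 'a set \<Rightarrow> nat" where
  "alpha_e V E e = card {S\<in>subtrees V E. e \<subseteq> S}"

definition alpha_bar_e :: "'a set \<Rightarrow> 'a set set \<Rightarrow> 'a set \<Rightarrow> nat" where
  "alpha_bar_e V E e = card {S\<in>subtrees V E. \<not> e \<subseteq> S}"

end

theory Submission
  imports Defs "HOL-Library.FuncSet"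
begin

text \<open>For an edge {b, c}, let the branch at c seen from b be the component of T - b containing
  c, with r(b, c) subtrees containing c, N(b, c) subtrees in total and m(b, c) vertices. Cutting
  a subtree at its root gives r(b, c) = \<Prod>(1 + r(c, c')) and N(b, c) = r(b, c) + \<Sum>N(c, c')
  over the children c' of c; since in T3 no vertex has exactly one child, induction yields
  N \<le> 2r - 1 and 2^(m+1) \<le> (r+1)^2. Likewise \<alpha>(T, v) = \<Prod>(1 + r(v, u)) and
  \<bar>\<alpha>(T, v) = \<Sum>N(v, u) over the neighbours u of v.

  Take an internal v maximising \<alpha>(T, v), of degree d. If every r(v, u) < 2n, then
  \<bar>\<alpha> \<le> 4dn while \<alpha>^2 \<ge> 2^(n-1+d), and 2^(n-1+d) \<ge> (2n^2 d)^2 once n \<ge> 30. Otherwise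
  some x = r(v, u) \<ge> 2n; then u is internal and with y = r(u, v) we have \<alpha>(T, v) = (1 + x) y
  and \<alpha>(T, u) = (1 + y) x, so maximality gives x \<le> y, and \<bar>\<alpha>(T, v) + y = N(v, u) + N(u, v)
  gives n \<bar>\<alpha> \<le> n (2x + y) \<le> 2(1 + x) y = 2\<alpha>.\<close>

lemma adj_in_sym: "adj_in E S a b \<Longrightarrow> adj_in E S b a"
  unfolding adj_in_def by (simp add: insert_commute)

lemma adj_in_rtranclp_sym: "(adj_in E S)\<^sup>*\<^sup>* a b \<Longrightarrow> (adj_in E S)\<^sup>*\<^sup>* b a"
  by (induction rule: rtranclp_induct) (auto intro: converse_rtranclp_into_rtranclp adj_in_sym)

lemma adj_in_rtranclp_in: "(adj_in E X)\<^sup>*\<^sup>* a w \<Longrightarrow> a \<in> X \<Longrightarrow> w \<in> X"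
  by (induction rule: rtranclp_induct) (auto simp: adj_in_def)

lemma adj_in_rtranclp_mono:
  assumes "A \<subseteq> B" and "(adj_in E A)\<^sup>*\<^sup>* x y"
  shows "(adj_in E B)\<^sup>*\<^sup>* x y"
proof -
  have "adj_in E A \<le> adj_in E B" using assms(1) unfolding adj_in_def by auto
  then show ?thesis using assms(2) by (metis rtranclp_mono predicate2D)
qed

lemma adj_in_rtranclp_reachable:
  "(adj_in E X)\<^sup>*\<^sup>* a w
    \<Longrightarrow> (adj_in E {y. (adj_in E X)\<^sup>*\<^sup>* a y})\<^sup>*\<^sup>* a w"
proof (induction rule: rtranclp_induct)
  case (step y z)
  from step.hyps have "(adj_in E X)\<^sup>*\<^sup>* a z" by (rule rtranclp.rtrancl_into_rtrancl)
  moreover have "{y, z} \<in> E" using step.hyps(2) by (simp add: adj_in_def)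
  ultimately have "adj_in E {y. (adj_in E X)\<^sup>*\<^sup>* a y} y z"
    using step.hyps(1) unfolding adj_in_def by blast
  with step.IH show ?case by (rule rtranclp.rtrancl_into_rtrancl)
qed simp

lemma induces_connectedI:
  assumes "\<forall>w\<in>S. (adj_in E S)\<^sup>*\<^sup>* w x"
  shows "induces_connected E S"
  unfolding induces_connected_def
  using assms by (metis adj_in_rtranclp_sym rtranclp_trans)

lemma card_filter_split: "finite A \<Longrightarrow> card A = card {x\<in>A. P x} + card {x\<in>A. \<not> P x}"
  by (subst card_Un_disjoint[symmetric]) (auto intro: arg_cong[where f = card])

lemma finite_subtrees: "finite X \<Longrightarrow> finite (subtrees X E)"
  unfolding subtrees_def by (simp add: finite_subset)

text \<open>Each vertex other than x0 picks a neighbour strictly closer to x0; distinct vertices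
  pick distinct edges.\<close>
lemma connected_card_le_Suc_card_edges:
  assumes sg: "simple_graph V E" and x0: "x0 \<in> V"
    and conn: "\<forall>y\<in>V. (adj_in E V)\<^sup>*\<^sup>* y x0"
  shows "card V \<le> card E + 1"
proof -
  have finV: "finite V" and "E \<subseteq> Pow V" using sg unfolding simple_graph_def by auto
  then have finE: "finite E" by (meson finite_Pow_iff finite_subset)
  let ?R = "adj_in E V"
  define dist where "dist y = (LEAST k. (?R ^^ k) y x0)" for y
  have parent: "\<exists>p. ?R y p \<and> dist p < dist y" if "y \<in> V" "y \<noteq> x0" for y
  proof -
    have "?R\<^sup>*\<^sup>* y x0" using conn that(1) by blast
    then obtain k where "(?R ^^ k) y x0" by (blast dest: rtranclp_imp_relpowp)
    then have dy: "(?R ^^ dist y) y x0" unfolding dist_def by (rule LeastI)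
    with that obtain j where j: "dist y = Suc j" by (cases "dist y") auto
    then obtain p where p: "?R y p" "(?R ^^ j) p x0" using dy relpowp_Suc_D2 by metis
    have "dist p \<le> j" unfolding dist_def using p(2) by (rule Least_le)
    then show ?thesis using p(1) j by auto
  qed
  define pa where "pa y = (SOME p. ?R y p \<and> dist p < dist y)" for y
  have pa: "?R y (pa y) \<and> dist (pa y) < dist y" if "y \<in> V - {x0}" for y
    unfolding pa_def using someI_ex[OF parent] that by blast
  have "inj_on (\<lambda>y. {y, pa y}) (V - {x0})"
  proof (rule inj_onI)
    fix y y' assume y: "y \<in> V - {x0}" and y': "y' \<in> V - {x0}" and eq: "{y, pa y} = {y', pa y'}"
    show "y = y'"
    proof (rule ccontr)
      assume "y \<noteq> y'"
      with eq have "y = pa y'" "pa y = y'" unfolding doubleton_eq_iff by auto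
      then show False using pa[OF y] pa[OF y'] by simp
    qed
  qed
  moreover have "(\<lambda>y. {y, pa y}) ` (V - {x0}) \<subseteq> E"
    using pa unfolding adj_in_def by auto
  ultimately have "card (V - {x0}) \<le> card E" using finE by (rule card_inj_on_le)
  then show ?thesis using x0 finV by (simp add: card_Diff_singleton)
qed

locale branch_decomposition =
  fixes E :: "'a set set" and C :: "'a set" and R :: "'a set" and x :: 'a and D :: "'a \<Rightarrow> 'a set"
  assumes finite_C: "finite C"
    and carrier_eq: "R = insert x (\<Union>c\<in>C. D c)"
    and centre_notin: "\<forall>c\<in>C. x \<notin> D c"
    and disjoint: "\<forall>c\<in>C. \<forall>c'\<in>C. c \<noteq> c' \<longrightarrow> D c \<inter> D c' = {}"
    and root_in: "\<forall>c\<in>C. c \<in> D c"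
    and centre_edge: "\<forall>c\<in>C. {x, c} \<in> E"
    and connected: "\<forall>c\<in>C. induces_connected E (D c)"
    and boundary:
      "\<forall>c\<in>C. \<forall>p\<in>D c. \<forall>q\<in>R. {p, q} \<in> E \<longrightarrow> q \<notin> D c \<longrightarrow> q = x \<and> p = c"
    and finite_D: "\<forall>c\<in>C. finite (D c)"
begin

lemma subtree_inter_branch:
  assumes S: "S \<in> subtrees R E" and xS: "x \<in> S" and c: "c \<in> C" and ne: "S \<inter> D c \<noteq> {}"
  shows "c \<in> S \<inter> D c" "induces_connected E (S \<inter> D c)"
proof -
  have SR: "S \<subseteq> R" and Sc: "induces_connected E S" using S unfolding subtrees_def by auto
  have to_root: "(adj_in E (S \<inter> D c))\<^sup>*\<^sup>* w c" if w: "w \<in> S \<inter> D c" for w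
  proof -
    have "(adj_in E S)\<^sup>*\<^sup>* w x" using Sc w xS unfolding induces_connected_def by blast
    then have "w \<in> D c \<longrightarrow> (adj_in E (S \<inter> D c))\<^sup>*\<^sup>* w c"
    proof (induction rule: converse_rtranclp_induct)
      case base then show ?case using centre_notin c by blast
    next
      case (step w y)
      have wy: "w \<in> S" "y \<in> S" "{w, y} \<in> E" using step.hyps(1) unfolding adj_in_def by auto
      show ?case
      proof
        assume wD: "w \<in> D c"
        show "(adj_in E (S \<inter> D c))\<^sup>*\<^sup>* w c"
        proof (cases "y \<in> D c")
          case True
          then have "adj_in E (S \<inter> D c) w y" using wy wD unfolding adj_in_def by simp
          then show ?thesis using step.IH True by (meson converse_rtranclp_into_rtranclp)
        next
          case False
          then have "y = x \<and> w = c" using boundary c wD wy SR by blast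
          then show ?thesis by simp
        qed
      qed
    qed
    then show ?thesis using w by blast
  qed
  obtain w where "w \<in> S \<inter> D c" using ne by blast
  then show "c \<in> S \<inter> D c" using to_root adj_in_rtranclp_in by metis
  show "induces_connected E (S \<inter> D c)" using to_root by (rule induces_connectedI[rule_format])
qed

text \<open>The empty set stands for a subtree that does not enter the branch.\<close>
definition branch_choices :: "'a \<Rightarrow> 'a set set" where
  "branch_choices c = insert {} {S \<in> subtrees (D c) E. c \<in> S}"

definition split :: "'a set \<Rightarrow> 'a \<Rightarrow> 'a set" where
  "split S = (\<lambda>c\<in>C. S \<inter> D c)"

definition glue :: "('a \<Rightarrow> 'a set) \<Rightarrow> 'a set" where
  "glue T = insert x (\<Union>c\<in>C. T c)"

lemma branch_choices_subset: "T \<in> branch_choices c \<Longrightarrow> T \<subseteq> D c"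
  unfolding branch_choices_def subtrees_def by blast

lemma glue_in_subtrees:
  assumes T: "T \<in> (\<Pi>\<^sub>E c\<in>C. branch_choices c)"
  shows "glue T \<in> subtrees R E"
proof -
  have Tc: "T c = {} \<or> (T c \<in> subtrees (D c) E \<and> c \<in> T c)" if "c \<in> C" for c
    using PiE_mem[OF T that] unfolding branch_choices_def by blast
  have "\<forall>w\<in>glue T. (adj_in E (glue T))\<^sup>*\<^sup>* w x"
  proof
    fix w assume "w \<in> glue T"
    then consider "w = x" | c where "c \<in> C" "w \<in> T c" unfolding glue_def by blast
    then show "(adj_in E (glue T))\<^sup>*\<^sup>* w x"
    proof cases
      case (2 c)
      then have tc: "T c \<in> subtrees (D c) E" "c \<in> T c" using Tc by auto
      have "(adj_in E (T c))\<^sup>*\<^sup>* w c" using tc 2 unfolding subtrees_def induces_connected_def by blast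
      moreover have "T c \<subseteq> glue T" using 2 unfolding glue_def by blast
      ultimately have "(adj_in E (glue T))\<^sup>*\<^sup>* w c" by (rule adj_in_rtranclp_mono[rotated])
      moreover have "adj_in E (glue T) c x"
        using centre_edge tc 2 unfolding adj_in_def glue_def by (auto simp: insert_commute)
      ultimately show ?thesis by simp
    qed simp
  qed
  then have "induces_connected E (glue T)" by (rule induces_connectedI)
  moreover have "glue T \<subseteq> R"
    using branch_choices_subset PiE_mem[OF T] unfolding glue_def carrier_eq by blast
  ultimately show ?thesis unfolding subtrees_def glue_def by blast
qed

lemma split_in_PiE:
  assumes S: "S \<in> subtrees R E" and xS: "x \<in> S"
  shows "split S \<in> (\<Pi>\<^sub>E c\<in>C. branch_choices c)"
proof -
  have "S \<inter> D c \<in> branch_choices c" if c: "c \<in> C" for c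
  proof (cases "S \<inter> D c = {}")
    case False
    from subtree_inter_branch[OF S xS c False] show ?thesis
      unfolding branch_choices_def subtrees_def by blast
  qed (simp add: branch_choices_def)
  then show ?thesis unfolding split_def by simp
qed

lemma glue_split:
  assumes "S \<in> subtrees R E" and "x \<in> S"
  shows "glue (split S) = S"
  using assms unfolding glue_def split_def subtrees_def carrier_eq by auto

lemma split_glue:
  assumes T: "T \<in> (\<Pi>\<^sub>E c\<in>C. branch_choices c)"
  shows "split (glue T) = T"
proof
  fix c
  show "split (glue T) c = T c"
  proof (cases "c \<in> C")
    case True
    have "glue T \<inter> D c = T c"
    proof
      show "T c \<subseteq> glue T \<inter> D c"
        using branch_choices_subset PiE_mem[OF T True] True unfolding glue_def by blast
      show "glue T \<inter> D c \<subseteq> T c"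
      proof
        fix w assume w: "w \<in> glue T \<inter> D c"
        then have "w \<noteq> x" using centre_notin True by blast
        then obtain c' where c': "c' \<in> C" "w \<in> T c'" using w unfolding glue_def by blast
        then have "w \<in> D c'" using branch_choices_subset PiE_mem[OF T c'(1)] by blast
        then have "c' = c" using disjoint c'(1) True w by blast
        then show "w \<in> T c" using c'(2) by simp
      qed
    qed
    then show ?thesis unfolding split_def using True by simp
  qed (simp add: split_def PiE_arb[OF T])
qed

lemma card_subtrees_containing_centre:
  "card {S \<in> subtrees R E. x \<in> S} = (\<Prod>c\<in>C. 1 + card {S \<in> subtrees (D c) E. c \<in> S})"
proof -
  have "bij_betw split {S \<in> subtrees R E. x \<in> S} (\<Pi>\<^sub>E c\<in>C. branch_choices c)"
  proof (rule bij_betw_byWitness[where f' = glue])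
    show "\<forall>S\<in>{S \<in> subtrees R E. x \<in> S}. glue (split S) = S" using glue_split by blast
    show "\<forall>T\<in>\<Pi>\<^sub>E c\<in>C. branch_choices c. split (glue T) = T" using split_glue by blast
    show "split ` {S \<in> subtrees R E. x \<in> S} \<subseteq> (\<Pi>\<^sub>E c\<in>C. branch_choices c)"
      using split_in_PiE by blast
    show "glue ` (\<Pi>\<^sub>E c\<in>C. branch_choices c) \<subseteq> {S \<in> subtrees R E. x \<in> S}"
      using glue_in_subtrees by (auto simp: glue_def)
  qed
  then have "card {S \<in> subtrees R E. x \<in> S} = card (\<Pi>\<^sub>E c\<in>C. branch_choices c)"
    by (rule bij_betw_same_card)
  also have "\<dots> = (\<Prod>c\<in>C. card (branch_choices c))" using finite_C by (rule card_PiE)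
  also have "\<dots> = (\<Prod>c\<in>C. 1 + card {S \<in> subtrees (D c) E. c \<in> S})"
  proof (rule prod.cong[OF refl])
    fix c assume "c \<in> C"
    then have "finite (subtrees (D c) E)" using finite_subtrees finite_D by blast
    then have "finite {S \<in> subtrees (D c) E. c \<in> S}" by simp
    moreover have "{} \<notin> subtrees (D c) E" unfolding subtrees_def by blast
    ultimately show "card (branch_choices c) = 1 + card {S \<in> subtrees (D c) E. c \<in> S}"
      unfolding branch_choices_def by simp
  qed
  finally show ?thesis .
qed

lemma subtree_avoiding_centre_in_branch:
  assumes S: "S \<in> subtrees R E" and xS: "x \<notin> S"
  shows "\<exists>c\<in>C. S \<subseteq> D c"
proof -
  have SR: "S \<subseteq> R" and Sc: "induces_connected E S" and "S \<noteq> {}"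
    using S unfolding subtrees_def by auto
  then obtain w where w: "w \<in> S" by blast
  then obtain c where c: "c \<in> C" "w \<in> D c" using SR xS unfolding carrier_eq by blast
  have "w' \<in> D c" if "w' \<in> S" for w'
  proof -
    have "(adj_in E S)\<^sup>*\<^sup>* w w'" using Sc w that unfolding induces_connected_def by blast
    then show ?thesis
    proof (induction rule: rtranclp_induct)
      case (step y z)
      then have "y \<in> S" "z \<in> S" "{y, z} \<in> E" unfolding adj_in_def by auto
      with SR have "z \<notin> D c \<Longrightarrow> z = x" using boundary c(1) step.IH by blast
      with \<open>z \<in> S\<close> xS show ?case by blast
    qed (rule c(2))
  qed
  then show ?thesis using c(1) by blast
qed

lemma card_subtrees_avoiding_centre:
  "card {S \<in> subtrees R E. x \<notin> S} = (\<Sum>c\<in>C. card (subtrees (D c) E))"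
proof -
  have "{S \<in> subtrees R E. x \<notin> S} = (\<Union>c\<in>C. subtrees (D c) E)"
  proof
    show "{S \<in> subtrees R E. x \<notin> S} \<subseteq> (\<Union>c\<in>C. subtrees (D c) E)"
      using subtree_avoiding_centre_in_branch by (fastforce simp: subtrees_def)
    show "(\<Union>c\<in>C. subtrees (D c) E) \<subseteq> {S \<in> subtrees R E. x \<notin> S}"
      using centre_notin unfolding subtrees_def carrier_eq by blast
  qed
  moreover have "card (\<Union>c\<in>C. subtrees (D c) E) = (\<Sum>c\<in>C. card (subtrees (D c) E))"
  proof (rule card_UN_disjoint[OF finite_C])
    show "\<forall>c\<in>C. finite (subtrees (D c) E)" using finite_D finite_subtrees by blast
    show "\<forall>c\<in>C. \<forall>c'\<in>C. c \<noteq> c'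
        \<longrightarrow> subtrees (D c) E \<inter> subtrees (D c') E = {}"
      using disjoint unfolding subtrees_def by blast
  qed
  ultimately show ?thesis by simp
qed

lemma card_carrier: "card R = 1 + (\<Sum>c\<in>C. card (D c))"
proof -
  have "card (\<Union>c\<in>C. D c) = (\<Sum>c\<in>C. card (D c))"
    using finite_C finite_D disjoint by (intro card_UN_disjoint) auto
  then show ?thesis using finite_C finite_D centre_notin unfolding carrier_eq by simp
qed

end

locale tree =
  fixes V :: "'a set" and E :: "'a set set"
  assumes is_tree: "is_tree V E"
begin

lemma simple_graph: "simple_graph V E"
  using is_tree unfolding is_tree_def by blast

lemma finite_V: "finite V"
  using simple_graph unfolding simple_graph_def by blast

lemma connected: "induces_connected E V"
  using is_tree unfolding is_tree_def by blast

lemma card_E: "card E = card V - 1"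
  using is_tree unfolding is_tree_def by blast

lemma finite_E: "finite E"
proof -
  have "E \<subseteq> Pow V" using simple_graph unfolding simple_graph_def by auto
  then show ?thesis using finite_V by (meson finite_Pow_iff finite_subset)
qed

lemma edge_endpoints:
  assumes "{a, b} \<in> E"
  shows "a \<in> V" "b \<in> V" "a \<noteq> b"
proof -
  obtain u v where uv: "{a, b} = {u, v}" "u \<noteq> v" "u \<in> V" "v \<in> V"
    using simple_graph assms unfolding simple_graph_def by blast
  then show "a \<in> V" "b \<in> V" "a \<noteq> b" unfolding doubleton_eq_iff by auto
qed

text \<open>Otherwise V would stay connected with card V - 2 edges.\<close>
lemma edge_is_bridge:
  assumes bc: "{b, c} \<in> E"
  shows "\<not> (adj_in (E - {{b, c}}) V)\<^sup>*\<^sup>* c b"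
proof
  let ?E' = "E - {{b, c}}"
  assume cb: "(adj_in ?E' V)\<^sup>*\<^sup>* c b"
  have step: "(adj_in ?E' V)\<^sup>*\<^sup>* y z" if "adj_in E V y z" for y z
  proof (cases "{y, z} = {b, c}")
    case True
    then have "(y = b \<and> z = c) \<or> (y = c \<and> z = b)" unfolding doubleton_eq_iff .
    then show ?thesis using cb adj_in_rtranclp_sym[OF cb] by auto
  next
    case False
    then have "adj_in ?E' V y z" using that unfolding adj_in_def by simp
    then show ?thesis by (rule r_into_rtranclp)
  qed
  have b: "b \<in> V" and c: "c \<in> V" and "b \<noteq> c" using edge_endpoints[OF bc] by auto
  have lift: "(adj_in ?E' V)\<^sup>*\<^sup>* y z" if "(adj_in E V)\<^sup>*\<^sup>* y z" for y z
    using that by (induction rule: rtranclp_induct) (auto intro: rtranclp_trans step)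
  have "\<forall>y\<in>V. (adj_in ?E' V)\<^sup>*\<^sup>* y b"
    using connected b unfolding induces_connected_def by (blast intro: lift)
  moreover have "simple_graph V ?E'" using simple_graph unfolding simple_graph_def by auto
  ultimately have "card V \<le> card ?E' + 1" using b by (intro connected_card_le_Suc_card_edges)
  moreover have "card ?E' = card E - 1" using bc finite_E by (simp add: card_Diff_singleton)
  moreover have "card {b, c} \<le> card V" using b c finite_V by (intro card_mono) auto
  ultimately show False using card_E \<open>b \<noteq> c\<close> by simp
qed

definition nbrs :: "'a \<Rightarrow> 'a set" where
  "nbrs v = {u. {v, u} \<in> E}"

definition branch :: "'a \<Rightarrow> 'a \<Rightarrow> 'a set" where
  "branch b c = {w. (adj_in E (V - {b}))\<^sup>*\<^sup>* c w}"

lemma nbrs_edge: "u \<in> nbrs v \<longleftrightarrow> {v, u} \<in> E"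
  unfolding nbrs_def by simp

lemma finite_nbrs: "finite (nbrs v)"
proof -
  have "nbrs v \<subseteq> V" unfolding nbrs_def using edge_endpoints(2) by blast
  then show ?thesis using finite_V by (rule finite_subset)
qed

lemma degree_eq_card_nbrs: "degree E v = card (nbrs v)"
proof -
  have "bij_betw (\<lambda>u. {v, u}) (nbrs v) {e\<in>E. v \<in> e}"
  proof (rule bij_betw_imageI)
    show "inj_on (\<lambda>u. {v, u}) (nbrs v)" by (rule inj_onI) (auto simp: doubleton_eq_iff)
    show "(\<lambda>u. {v, u}) ` nbrs v = {e\<in>E. v \<in> e}"
    proof
      show "(\<lambda>u. {v, u}) ` nbrs v \<subseteq> {e\<in>E. v \<in> e}" unfolding nbrs_def by blast
      show "{e\<in>E. v \<in> e} \<subseteq> (\<lambda>u. {v, u}) ` nbrs v"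
      proof
        fix e assume e: "e \<in> {e\<in>E. v \<in> e}"
        then obtain a b where ab: "e = {a, b}"
          using simple_graph unfolding simple_graph_def by blast
        with e have "(b \<in> nbrs v \<and> e = {v, b}) \<or> (a \<in> nbrs v \<and> e = {v, a})"
          unfolding nbrs_def by (auto simp: insert_commute)
        then show "e \<in> (\<lambda>u. {v, u}) ` nbrs v" by blast
      qed
    qed
  qed
  then show ?thesis unfolding degree_def by (simp add: bij_betw_same_card)
qed

lemma branch_reach_avoids_edge:
  assumes "(adj_in E (V - {b}))\<^sup>*\<^sup>* c w"
  shows "(adj_in (E - {{b, c}}) V)\<^sup>*\<^sup>* c w"
proof -
  have "adj_in (E - {{b, c}}) V x y" if "adj_in E (V - {b}) x y" for x y
  proof -
    have "{x, y} \<noteq> {b, c}" using that unfolding adj_in_def doubleton_eq_iff by blast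
    then show ?thesis using that unfolding adj_in_def by simp
  qed
  then have "adj_in E (V - {b}) \<le> adj_in (E - {{b, c}}) V" by blast
  then show ?thesis using assms by (metis rtranclp_mono predicate2D)
qed

lemma root_in_branch: "c \<in> branch b c"
  unfolding branch_def by simp

lemma branch_subset:
  assumes "{b, c} \<in> E"
  shows "branch b c \<subseteq> V - {b}"
proof
  fix w assume "w \<in> branch b c"
  then have "(adj_in E (V - {b}))\<^sup>*\<^sup>* c w" unfolding branch_def by simp
  moreover have "c \<in> V - {b}" using edge_endpoints[OF assms] by auto
  ultimately show "w \<in> V - {b}" by (rule adj_in_rtranclp_in)
qed

lemma finite_branch: "finite (branch b c)"
proof -
  have "branch b c \<subseteq> insert c V"
  proof
    fix w assume "w \<in> branch b c"
    then have "(adj_in E (V - {b}))\<^sup>*\<^sup>* c w" unfolding branch_def by simp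
    then show "w \<in> insert c V" by (induction rule: rtranclp_induct) (auto simp: adj_in_def)
  qed
  then show ?thesis using finite_V by (simp add: finite_subset)
qed

lemma branch_boundary:
  assumes bc: "{b, c} \<in> E" and p: "p \<in> branch b c" and pq: "{p, q} \<in> E"
    and q: "q \<notin> branch b c"
  shows "q = b \<and> p = c"
proof -
  have cp: "(adj_in E (V - {b}))\<^sup>*\<^sup>* c p" using p unfolding branch_def by simp
  have pV: "p \<in> V - {b}" using branch_subset[OF bc] p by blast
  have qb: "q = b"
  proof (rule ccontr)
    assume "q \<noteq> b"
    then have "adj_in E (V - {b}) p q" using pV edge_endpoints(2)[OF pq] pq unfolding adj_in_def by simp
    with cp have "q \<in> branch b c" unfolding branch_def by simp
    with q show False by simp
  qed
  have "p = c"
  proof (rule ccontr)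
    assume "p \<noteq> c"
    then have "adj_in (E - {{b, c}}) V p b"
      using pq qb pV edge_endpoints[OF bc] unfolding adj_in_def doubleton_eq_iff by auto
    with branch_reach_avoids_edge[OF cp] have "(adj_in (E - {{b, c}}) V)\<^sup>*\<^sup>* c b" by simp
    with edge_is_bridge[OF bc] show False by simp
  qed
  with qb show ?thesis by simp
qed

lemma branch_disjoint:
  assumes bc: "{b, c} \<in> E" and bc': "{b, c'} \<in> E" and "c \<noteq> c'"
  shows "branch b c \<inter> branch b c' = {}"
proof (rule ccontr)
  assume "branch b c \<inter> branch b c' \<noteq> {}"
  then obtain w where "(adj_in E (V - {b}))\<^sup>*\<^sup>* c w" "(adj_in E (V - {b}))\<^sup>*\<^sup>* c' w"
    unfolding branch_def by auto
  then have "(adj_in E (V - {b}))\<^sup>*\<^sup>* c c'" by (metis adj_in_rtranclp_sym rtranclp_trans)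
  then have "c' \<in> branch b c" unfolding branch_def by simp
  moreover have "b \<notin> branch b c" using branch_subset[OF bc] by blast
  moreover have "{c', b} \<in> E" using bc' by (simp add: insert_commute)
  ultimately show False using branch_boundary[OF bc] \<open>c \<noteq> c'\<close> by blast
qed

lemma branch_connected: "induces_connected E (branch b c)"
proof (rule induces_connectedI, rule ballI)
  fix w assume "w \<in> branch b c"
  then have "(adj_in E (V - {b}))\<^sup>*\<^sup>* c w" unfolding branch_def by simp
  then have "(adj_in E (branch b c))\<^sup>*\<^sup>* c w"
    unfolding branch_def by (rule adj_in_rtranclp_reachable)
  then show "(adj_in E (branch b c))\<^sup>*\<^sup>* w c" by (rule adj_in_rtranclp_sym)
qed

lemma vertices_eq_branches:
  assumes v: "v \<in> V"
  shows "V = insert v (\<Union>u\<in>nbrs v. branch v u)"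
proof
  show "insert v (\<Union>u\<in>nbrs v. branch v u) \<subseteq> V"
    using v branch_subset unfolding nbrs_def by blast
  show "V \<subseteq> insert v (\<Union>u\<in>nbrs v. branch v u)"
  proof
    fix w assume w: "w \<in> V"
    have "(adj_in E V)\<^sup>*\<^sup>* w v" using connected w v unfolding induces_connected_def by blast
    then show "w \<in> insert v (\<Union>u\<in>nbrs v. branch v u)"
    proof (induction rule: converse_rtranclp_induct)
      case (step y z)
      have yz: "{y, z} \<in> E" "y \<in> V" using step.hyps(1) unfolding adj_in_def by auto
      consider "y = v" | "y \<noteq> v" "z = v" | "y \<noteq> v" "z \<noteq> v" by blast
      then show ?case
      proof cases
        case 2
        then have "y \<in> nbrs v" using yz unfolding nbrs_def by (simp add: insert_commute)
        then show ?thesis using root_in_branch by blast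
      next
        case 3
        then obtain u where u: "u \<in> nbrs v" "z \<in> branch v u" using step.IH by blast
        then have "z \<in> V - {v}" using branch_subset unfolding nbrs_def by blast
        then have "adj_in E (V - {v}) z y"
          using yz 3 unfolding adj_in_def by (simp add: insert_commute)
        then have "y \<in> branch v u" using u(2) unfolding branch_def by simp
        then show ?thesis using u(1) by blast
      qed simp
    qed simp
  qed
qed

lemma branch_eq_subbranches:
  assumes bc: "{b, c} \<in> E"
  shows "branch b c = insert c (\<Union>c'\<in>nbrs c - {b}. branch c c')"
proof
  show "branch b c \<subseteq> insert c (\<Union>c'\<in>nbrs c - {b}. branch c c')"
  proof
    fix w assume "w \<in> branch b c"
    then have "(adj_in E (V - {b}))\<^sup>*\<^sup>* c w" unfolding branch_def by simp
    then show "w \<in> insert c (\<Union>c'\<in>nbrs c - {b}. branch c c')"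
    proof (induction rule: rtranclp_induct)
      case (step y z)
      have yz: "{y, z} \<in> E" "z \<in> V" "z \<noteq> b" using step.hyps(2) unfolding adj_in_def by auto
      consider "z = c" | "z \<noteq> c" "y = c" | "z \<noteq> c" "y \<noteq> c" by blast
      then show ?case
      proof cases
        case 2
        then have "z \<in> nbrs c - {b}" using yz unfolding nbrs_def by simp
        then show ?thesis using root_in_branch by blast
      next
        case 3
        then obtain u where u: "u \<in> nbrs c - {b}" "y \<in> branch c u" using step.IH by blast
        then have "adj_in E (V - {c}) y z"
          using yz 3 branch_subset[of c u] unfolding nbrs_def adj_in_def by auto
        then have "z \<in> branch c u" using u(2) unfolding branch_def by simp
        then show ?thesis using u(1) by blast
      qed simp
    qed simp
  qed
  have "branch c c' \<subseteq> branch b c" if c': "c' \<in> nbrs c - {b}" for c'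
  proof
    fix w assume w: "w \<in> branch c c'"
    have cc': "{c, c'} \<in> E" using c' unfolding nbrs_def by simp
    have "b \<notin> branch c c'"
    proof
      assume "b \<in> branch c c'"
      moreover have "c \<notin> branch c c'" using branch_subset[OF cc'] by blast
      ultimately show False using branch_boundary[OF cc'] bc c' by blast
    qed
    then have sub: "branch c c' \<subseteq> V - {b}" using branch_subset[OF cc'] by blast
    have "(adj_in E (V - {c}))\<^sup>*\<^sup>* c' w" using w unfolding branch_def by simp
    then have "(adj_in E (branch c c'))\<^sup>*\<^sup>* c' w"
      unfolding branch_def by (rule adj_in_rtranclp_reachable)
    with sub have "(adj_in E (V - {b}))\<^sup>*\<^sup>* c' w" by (rule adj_in_rtranclp_mono)
    moreover have "adj_in E (V - {b}) c c'"
      using cc' c' edge_endpoints[OF cc'] edge_endpoints[OF bc] unfolding adj_in_def by auto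
    ultimately have "(adj_in E (V - {b}))\<^sup>*\<^sup>* c w" by (meson converse_rtranclp_into_rtranclp)
    then show "w \<in> branch b c" unfolding branch_def by simp
  qed
  then show "insert c (\<Union>c'\<in>nbrs c - {b}. branch c c') \<subseteq> branch b c"
    using root_in_branch by blast
qed

lemma branch_decomposition_at_vertex:
  assumes v: "v \<in> V"
  shows "branch_decomposition E (nbrs v) V v (branch v)"
proof
  show "finite (nbrs v)" by (rule finite_nbrs)
  show "V = insert v (\<Union>u\<in>nbrs v. branch v u)" using v by (rule vertices_eq_branches)
  show "\<forall>u\<in>nbrs v. v \<notin> branch v u" using branch_subset unfolding nbrs_def by blast
  show "\<forall>u\<in>nbrs v. \<forall>u'\<in>nbrs v. u \<noteq> u' \<longrightarrow> branch v u \<inter> branch v u' = {}"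
    using branch_disjoint unfolding nbrs_def by blast
  show "\<forall>u\<in>nbrs v. u \<in> branch v u" using root_in_branch by blast
  show "\<forall>u\<in>nbrs v. {v, u} \<in> E" unfolding nbrs_def by blast
  show "\<forall>u\<in>nbrs v. induces_connected E (branch v u)" using branch_connected by blast
  show "\<forall>u\<in>nbrs v. \<forall>p\<in>branch v u. \<forall>q\<in>V.
      {p, q} \<in> E \<longrightarrow> q \<notin> branch v u \<longrightarrow> q = v \<and> p = u"
    using branch_boundary unfolding nbrs_def by blast
  show "\<forall>u\<in>nbrs v. finite (branch v u)" using finite_branch by blast
qed

lemma branch_decomposition_at_edge:
  assumes bc: "{b, c} \<in> E"
  shows "branch_decomposition E (nbrs c - {b}) (branch b c) c (branch c)"
proof
  show "finite (nbrs c - {b})" using finite_nbrs by blast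
  show "branch b c = insert c (\<Union>c'\<in>nbrs c - {b}. branch c c')"
    using bc by (rule branch_eq_subbranches)
  show "\<forall>c'\<in>nbrs c - {b}. c \<notin> branch c c'" using branch_subset unfolding nbrs_def by blast
  show "\<forall>c'\<in>nbrs c - {b}. \<forall>c''\<in>nbrs c - {b}.
      c' \<noteq> c'' \<longrightarrow> branch c c' \<inter> branch c c'' = {}"
    using branch_disjoint unfolding nbrs_def by blast
  show "\<forall>c'\<in>nbrs c - {b}. c' \<in> branch c c'" using root_in_branch by blast
  show "\<forall>c'\<in>nbrs c - {b}. {c, c'} \<in> E" unfolding nbrs_def by blast
  show "\<forall>c'\<in>nbrs c - {b}. induces_connected E (branch c c')" using branch_connected by blast
  show "\<forall>c'\<in>nbrs c - {b}. \<forall>p\<in>branch c c'. \<forall>q\<in>branch b c.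
      {p, q} \<in> E \<longrightarrow> q \<notin> branch c c' \<longrightarrow> q = c \<and> p = c'"
    using branch_boundary unfolding nbrs_def by blast
  show "\<forall>c'\<in>nbrs c - {b}. finite (branch c c')" using finite_branch by blast
qed

definition n_rooted :: "'a \<Rightarrow> 'a \<Rightarrow> nat" where
  "n_rooted b c = card {S \<in> subtrees (branch b c) E. c \<in> S}"

definition n_subtrees :: "'a \<Rightarrow> 'a \<Rightarrow> nat" where
  "n_subtrees b c = card (subtrees (branch b c) E)"

definition branch_size :: "'a \<Rightarrow> 'a \<Rightarrow> nat" where
  "branch_size b c = card (branch b c)"

lemma
  assumes "{b, c} \<in> E"
  shows n_rooted_rec: "n_rooted b c = (\<Prod>c'\<in>nbrs c - {b}. 1 + n_rooted c c')"
    and n_subtrees_rec: "n_subtrees b c = n_rooted b c + (\<Sum>c'\<in>nbrs c - {b}. n_subtrees c c')"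
    and branch_size_rec: "branch_size b c = 1 + (\<Sum>c'\<in>nbrs c - {b}. branch_size c c')"
proof -
  interpret branch_decomposition E "nbrs c - {b}" "branch b c" c "branch c"
    using assms by (rule branch_decomposition_at_edge)
  show "n_rooted b c = (\<Prod>c'\<in>nbrs c - {b}. 1 + n_rooted c c')"
    unfolding n_rooted_def by (rule card_subtrees_containing_centre)
  have "finite (subtrees (branch b c) E)" using finite_branch by (rule finite_subtrees)
  then have "n_subtrees b c = card {S \<in> subtrees (branch b c) E. c \<in> S}
      + card {S \<in> subtrees (branch b c) E. c \<notin> S}"
    unfolding n_subtrees_def by (rule card_filter_split)
  then show "n_subtrees b c = n_rooted b c + (\<Sum>c'\<in>nbrs c - {b}. n_subtrees c c')"
    unfolding n_rooted_def n_subtrees_def card_subtrees_avoiding_centre .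
  show "branch_size b c = 1 + (\<Sum>c'\<in>nbrs c - {b}. branch_size c c')"
    unfolding branch_size_def by (rule card_carrier)
qed

lemma
  assumes "v \<in> V"
  shows alpha_v_eq_prod: "alpha_v V E v = (\<Prod>u\<in>nbrs v. 1 + n_rooted v u)"
    and alpha_bar_v_eq_sum: "alpha_bar_v V E v = (\<Sum>u\<in>nbrs v. n_subtrees v u)"
    and card_V_eq_Suc_sum: "card V = 1 + (\<Sum>u\<in>nbrs v. branch_size v u)"
proof -
  interpret branch_decomposition E "nbrs v" V v "branch v"
    using assms by (rule branch_decomposition_at_vertex)
  show "alpha_v V E v = (\<Prod>u\<in>nbrs v. 1 + n_rooted v u)"
    unfolding alpha_v_def n_rooted_def by (rule card_subtrees_containing_centre)
  show "alpha_bar_v V E v = (\<Sum>u\<in>nbrs v. n_subtrees v u)"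
    unfolding alpha_bar_v_def n_subtrees_def by (rule card_subtrees_avoiding_centre)
  show "card V = 1 + (\<Sum>u\<in>nbrs v. branch_size v u)"
    unfolding branch_size_def by (rule card_carrier)
qed

lemma alpha_v_edge_split:
  assumes vu: "{v, u} \<in> E"
  shows "alpha_v V E v = (1 + n_rooted v u) * n_rooted u v"
proof -
  have "u \<in> nbrs v" using vu by (simp add: nbrs_edge)
  then have "alpha_v V E v = (1 + n_rooted v u) * (\<Prod>w\<in>nbrs v - {u}. 1 + n_rooted v w)"
    using alpha_v_eq_prod[OF edge_endpoints(1)[OF vu]] finite_nbrs by (simp add: prod.remove)
  also have "(\<Prod>w\<in>nbrs v - {u}. 1 + n_rooted v w) = n_rooted u v"
    using vu by (simp add: insert_commute n_rooted_rec)
  finally show ?thesis .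
qed

lemma alpha_bar_v_edge_split:
  assumes vu: "{v, u} \<in> E"
  shows "alpha_bar_v V E v + n_rooted u v = n_subtrees v u + n_subtrees u v"
proof -
  have "u \<in> nbrs v" using vu by (simp add: nbrs_edge)
  then have "alpha_bar_v V E v = n_subtrees v u + (\<Sum>w\<in>nbrs v - {u}. n_subtrees v w)"
    using alpha_bar_v_eq_sum[OF edge_endpoints(1)[OF vu]] finite_nbrs by (simp add: sum.remove)
  moreover have "n_subtrees u v = n_rooted u v + (\<Sum>w\<in>nbrs v - {u}. n_subtrees v w)"
    using vu by (simp add: insert_commute n_subtrees_rec)
  ultimately show ?thesis by simp
qed

lemma ex_internal_maximising_alpha_v:
  assumes "\<exists>v\<in>V. internal E v"
  obtains v where "v \<in> V" "internal E v"
    "\<forall>w\<in>V. internal E w \<longrightarrow> alpha_v V E w \<le> alpha_v V E v"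
proof -
  define I where "I = {v\<in>V. internal E v}"
  have "finite I" using finite_V unfolding I_def by simp
  moreover have "I \<noteq> {}" using assms unfolding I_def by blast
  ultimately have "Max (alpha_v V E ` I) \<in> alpha_v V E ` I" by simp
  then obtain v where "v \<in> I" and v_max: "alpha_v V E v = Max (alpha_v V E ` I)"
    by (metis imageE)
  moreover have "\<forall>w\<in>V. internal E w \<longrightarrow> alpha_v V E w \<le> alpha_v V E v"
    unfolding v_max using \<open>finite I\<close> unfolding I_def by simp
  ultimately show ?thesis using that unfolding I_def by blast
qed

lemma n_rooted_at_leaf:
  assumes bc: "{b, c} \<in> E" and "\<not> internal E c"
  shows "n_rooted b c = 1"
proof -
  have "b \<in> nbrs c" using bc unfolding nbrs_def by (simp add: insert_commute)
  moreover have "card (nbrs c) < 2" using assms(2) degree_eq_card_nbrs unfolding internal_def by simp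
  ultimately have "nbrs c - {b} = {}" using finite_nbrs card_le_Suc0_iff_eq[of "nbrs c"] by auto
  then show ?thesis unfolding n_rooted_rec[OF bc] by (simp only: prod.empty)
qed

end

lemma sum_plus_3_le_twice_prod:
  fixes f g :: "'a \<Rightarrow> nat"
  assumes "finite C" "C \<noteq> {}" "\<forall>c\<in>C. g c + 1 \<le> 2 * f c"
  shows "(\<Sum>c\<in>C. g c) + 3 \<le> 2 * (\<Prod>c\<in>C. 1 + f c)"
  using assms
proof (induction C rule: finite_ne_induct)
  case (singleton a)
  then show ?case by simp
next
  case (insert a C)
  have "(\<Prod>c\<in>C. 1 + f c) \<ge> 1" by (rule prod_ge_1) simp
  then have "g a + 1 \<le> 2 * f a * (\<Prod>c\<in>C. 1 + f c)"
    using insert.prems by (metis insertI1 le_trans mult.commute mult_le_mono1 nat_mult_1)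
  then show ?case using insert by (simp add: algebra_simps)
qed

lemma sum_Suc_le_prod_Suc:
  fixes f g :: "'a \<Rightarrow> nat"
  assumes C: "finite C" "card C \<noteq> 1" and fg: "\<forall>c\<in>C. g c + 1 \<le> 2 * f c"
  shows "(\<Sum>c\<in>C. g c) + 1 \<le> (\<Prod>c\<in>C. 1 + f c)"
proof (cases "C = {}")
  case False
  then obtain a where a: "a \<in> C" by blast
  with C have "C - {a} \<noteq> {}" by (metis insert_Diff is_singletonI is_singleton_altdef)
  then have G: "(\<Sum>c\<in>C - {a}. g c) + 3 \<le> 2 * (\<Prod>c\<in>C - {a}. 1 + f c)"
    using sum_plus_3_le_twice_prod[of "C - {a}" g f] C fg by blast
  have ga: "g a + 1 \<le> 2 * f a" using fg a by blast
  then obtain s where s: "f a = Suc s" by (cases "f a") auto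
  from G obtain t where t: "(\<Prod>c\<in>C - {a}. 1 + f c) = 2 + t"
    using le_Suc_ex[of 2] by fastforce
  have "g a + (\<Sum>c\<in>C - {a}. g c) + 1 \<le> (1 + f a) * (\<Prod>c\<in>C - {a}. 1 + f c)"
    using ga G unfolding s t by (simp add: algebra_simps)
  then show ?thesis using a C by (simp add: sum.remove prod.remove)
qed simp

lemma pow2_sum_le_prod_square:
  fixes m r :: "'a \<Rightarrow> nat"
  assumes "finite C" "\<forall>c\<in>C. 2 ^ (m c + 1) \<le> (r c + 1)\<^sup>2"
  shows "(2::nat) ^ ((\<Sum>c\<in>C. m c) + card C) \<le> (\<Prod>c\<in>C. 1 + r c)\<^sup>2"
proof -
  have "(2::nat) ^ ((\<Sum>c\<in>C. m c) + card C) = 2 ^ (\<Sum>c\<in>C. m c + 1)"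
    by (subst sum.distrib) simp
  also have "\<dots> = (\<Prod>c\<in>C. 2 ^ (m c + 1))" by (rule power_sum)
  also have "\<dots> \<le> (\<Prod>c\<in>C. (r c + 1)\<^sup>2)" using assms(2) by (intro prod_mono) auto
  also have "\<dots> = (\<Prod>c\<in>C. 1 + r c)\<^sup>2" by (simp add: prod_power_distrib add.commute)
  finally show ?thesis .
qed

lemma pow2_Suc_sum_le_Suc_prod_square:
  fixes m r :: "'a \<Rightarrow> nat"
  assumes C: "finite C" "card C \<noteq> 1" and mr: "\<forall>c\<in>C. 2 ^ (m c + 1) \<le> (r c + 1)\<^sup>2"
  shows "(2::nat) ^ ((1 + (\<Sum>c\<in>C. m c)) + 1) \<le> ((\<Prod>c\<in>C. 1 + r c) + 1)\<^sup>2"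
proof (cases "C = {}")
  case False
  with C have "card C \<ge> 2" by (metis One_nat_def Suc_1 Suc_leI card_gt_0_iff le_neq_implies_less)
  then have "(2::nat) ^ ((1 + (\<Sum>c\<in>C. m c)) + 1) \<le> 2 ^ ((\<Sum>c\<in>C. m c) + card C)"
    by (intro power_increasing) auto
  also have "\<dots> \<le> (\<Prod>c\<in>C. 1 + r c)\<^sup>2" using C(1) mr by (rule pow2_sum_le_prod_square)
  also have "\<dots> \<le> ((\<Prod>c\<in>C. 1 + r c) + 1)\<^sup>2" by (intro power_mono) auto
  finally show ?thesis .
qed (simp add: power2_eq_square)

lemma eight_mult_pow4_le_pow2:
  assumes "n \<ge> 30"
  shows "8 * n ^ 4 \<le> (2::nat) ^ (n - 1)"
  using assms
proof (induction n rule: dec_induct)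
  case (step k)
  have "30 * k \<le> k * k" "30 * (k * k) \<le> k * (k * k)" "30 * (k * (k * k)) \<le> k * (k * (k * k))"
    using step(1) by (simp_all add: mult_le_mono1)
  moreover have "(Suc k) ^ 4 = k * (k * (k * k)) + 4 * (k * (k * k)) + 6 * (k * k) + 4 * k + 1"
    and "k ^ 4 = k * (k * (k * k))"
    by (simp_all add: eval_nat_numeral algebra_simps)
  ultimately have "(Suc k) ^ 4 \<le> 2 * k ^ 4" using step(1) by linarith
  then have "8 * (Suc k) ^ 4 \<le> 2 * 2 ^ (k - 1)" using step(3) by linarith
  also have "\<dots> = 2 ^ (Suc k - 1)" using step(1) by (cases k) auto
  finally show ?case .
qed simp

lemma square_le_twice_pow2: "d\<^sup>2 \<le> 2 * (2::nat) ^ d"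
proof (induction d rule: nat_less_induct)
  case (1 d)
  show ?case
  proof (cases "d \<le> 3")
    case True
    then have "d = 0 \<or> d = 1 \<or> d = 2 \<or> d = 3" by auto
    then show ?thesis by auto
  next
    case False
    then obtain e where e: "d = Suc e" "e \<ge> 3" by (cases d) auto
    have "3 * e \<le> e * e" using e(2) by (rule mult_le_mono1)
    moreover have "(Suc e)\<^sup>2 = e * e + 2 * e + 1" "e\<^sup>2 = e * e" by (simp_all add: power2_eq_square)
    ultimately have "(Suc e)\<^sup>2 \<le> 2 * e\<^sup>2" using e(2) by linarith
    also have "\<dots> \<le> 2 * (2 * 2 ^ e)" using 1 e by simp
    finally show ?thesis using e(1) by simp
  qed
qed

lemma vertex_inequality_light_arith:
  fixes n d a s :: nat
  assumes n: "n \<ge> 30" and a: "2 ^ (n - 1 + d) \<le> a\<^sup>2" and s: "s \<le> d * (4 * n)"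
  shows "n * s \<le> 2 * a"
proof -
  have "(2 * n\<^sup>2 * d)\<^sup>2 = 4 * n ^ 4 * d\<^sup>2" by (simp add: power_mult_distrib flip: power_mult)
  also have "\<dots> \<le> 4 * n ^ 4 * (2 * 2 ^ d)" using square_le_twice_pow2[of d] by simp
  also have "\<dots> = (8 * n ^ 4) * 2 ^ d" by simp
  also have "\<dots> \<le> 2 ^ (n - 1) * 2 ^ d" using eight_mult_pow4_le_pow2[OF n] by simp
  also have "\<dots> \<le> a\<^sup>2" using a by (simp add: power_add)
  finally have "2 * n\<^sup>2 * d \<le> a" by (rule power2_le_imp_le) simp
  moreover have "n * s \<le> 2 * (2 * n\<^sup>2 * d)"
    using mult_le_mono2[OF s, of n] by (simp add: power2_eq_square algebra_simps)
  ultimately show ?thesis by linarith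
qed

lemma vertex_inequality_heavy_arith:
  fixes n x y s :: nat
  assumes x: "2 * n \<le> x" and xy: "x \<le> y" and s: "s + 2 \<le> 2 * x + y"
  shows "n * s \<le> 2 * ((1 + x) * y)"
proof -
  have "n * s \<le> n * (2 * x + y)" using s by simp
  also have "\<dots> = 2 * (n * x) + n * y" by (simp add: algebra_simps)
  also have "\<dots> \<le> 2 * (n * y) + n * y" using xy by simp
  also have "\<dots> \<le> 2 * (x * y)"
  proof -
    have "2 * (n * y) \<le> x * y" using mult_le_mono1[OF x, of y] by (simp add: mult.assoc)
    then show ?thesis by linarith
  qed
  finally show ?thesis by (simp add: algebra_simps)
qed

locale t3_tree = tree +
  assumes internal_degree_ge_3: "\<forall>v\<in>V. internal E v \<longrightarrow> degree E v \<ge> 3"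
begin

lemma card_nbrs_Diff_ne_1:
  assumes bc: "{b, c} \<in> E"
  shows "card (nbrs c - {b}) \<noteq> 1"
proof -
  have "b \<in> nbrs c" using bc by (simp add: nbrs_edge insert_commute)
  then have "card (nbrs c - {b}) = card (nbrs c) - 1"
    using finite_nbrs by (simp add: card_Diff_singleton)
  moreover have "card (nbrs c) \<noteq> 2"
    using internal_degree_ge_3 edge_endpoints(2)[OF bc] unfolding internal_def degree_eq_card_nbrs
    by fastforce
  ultimately show ?thesis by simp
qed

lemma branch_counts_bound:
  assumes "{b, c} \<in> E"
  shows "n_subtrees b c + 1 \<le> 2 * n_rooted b c
    \<and> 2 ^ (branch_size b c + 1) \<le> (n_rooted b c + 1)\<^sup>2"
  using assms
proof (induction "branch_size b c" arbitrary: b c rule: less_induct)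
  case less
  let ?C = "nbrs c - {b}"
  have child: "{c, c'} \<in> E" if "c' \<in> ?C" for c' using that by (simp add: nbrs_edge)
  have "branch_size c c' < branch_size b c" if "c' \<in> ?C" for c'
  proof -
    have "branch_size c c' \<le> (\<Sum>c'\<in>?C. branch_size c c')"
      using that finite_nbrs by (intro member_le_sum) auto
    then show ?thesis using branch_size_rec[OF less.prems] by simp
  qed
  then have IH: "\<forall>c'\<in>?C. n_subtrees c c' + 1 \<le> 2 * n_rooted c c'
      \<and> 2 ^ (branch_size c c' + 1) \<le> (n_rooted c c' + 1)\<^sup>2"
    using less.hyps child by blast
  have finC: "finite ?C" using finite_nbrs by blast
  have "(\<Sum>c'\<in>?C. n_subtrees c c') + 1 \<le> (\<Prod>c'\<in>?C. 1 + n_rooted c c')"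
    using sum_Suc_le_prod_Suc[OF finC card_nbrs_Diff_ne_1[OF less.prems]] IH by blast
  moreover have "2 ^ ((1 + (\<Sum>c'\<in>?C. branch_size c c')) + 1)
      \<le> ((\<Prod>c'\<in>?C. 1 + n_rooted c c') + 1)\<^sup>2"
    using pow2_Suc_sum_le_Suc_prod_square[OF finC card_nbrs_Diff_ne_1[OF less.prems]] IH by blast
  ultimately show ?case
    using n_rooted_rec[OF less.prems] n_subtrees_rec[OF less.prems] branch_size_rec[OF less.prems]
    by simp
qed

text \<open>A heavy branch cannot hang at a leaf, so u is internal and maximality of \<alpha>(T, v) gives
  n_rooted v u \<le> n_rooted u v.\<close>
lemma vertex_inequality_heavy_branch:
  assumes vu: "{v, u} \<in> E"
    and max: "\<forall>w\<in>V. internal E w \<longrightarrow> alpha_v V E w \<le> alpha_v V E v"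
    and heavy: "2 * card V \<le> n_rooted v u"
  shows "card V * alpha_bar_v V E v \<le> 2 * alpha_v V E v"
proof -
  define x where "x = n_rooted v u"
  define y where "y = n_rooted u v"
  have uv: "{u, v} \<in> E" using vu by (simp add: insert_commute)
  have "card V \<ge> 1" using edge_endpoints(1)[OF vu] finite_V by (auto simp: Suc_le_eq card_gt_0_iff)
  then have "internal E u" using n_rooted_at_leaf[OF vu] heavy by fastforce
  then have "alpha_v V E u \<le> alpha_v V E v" using max edge_endpoints(2)[OF vu] by blast
  then have "(1 + y) * x \<le> (1 + x) * y"
    unfolding alpha_v_edge_split[OF vu] alpha_v_edge_split[OF uv] x_def y_def by simp
  then have "x \<le> y" by (simp add: algebra_simps)
  moreover have "alpha_bar_v V E v + 2 \<le> 2 * x + y"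
    using alpha_bar_v_edge_split[OF vu] branch_counts_bound[OF vu] branch_counts_bound[OF uv]
    unfolding x_def y_def by linarith
  ultimately have "card V * alpha_bar_v V E v \<le> 2 * ((1 + x) * y)"
    using heavy unfolding x_def by (intro vertex_inequality_heavy_arith) auto
  then show ?thesis unfolding alpha_v_edge_split[OF vu] x_def y_def .
qed

lemma vertex_inequality_light_branches:
  assumes n: "card V \<ge> 30" and v: "v \<in> V"
    and light: "\<forall>u\<in>nbrs v. n_rooted v u < 2 * card V"
  shows "card V * alpha_bar_v V E v \<le> 2 * alpha_v V E v"
proof -
  have bound: "n_subtrees v u + 1 \<le> 2 * n_rooted v u
      \<and> 2 ^ (branch_size v u + 1) \<le> (n_rooted v u + 1)\<^sup>2" if "u \<in> nbrs v" for u
    using that branch_counts_bound by (simp add: nbrs_edge)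
  have "(\<Sum>u\<in>nbrs v. n_subtrees v u) \<le> card (nbrs v) * (4 * card V)"
    using sum_bounded_above[of "nbrs v" "\<lambda>u. n_subtrees v u" "4 * card V"] bound light
    by fastforce
  moreover have "2 ^ ((\<Sum>u\<in>nbrs v. branch_size v u) + card (nbrs v))
      \<le> (\<Prod>u\<in>nbrs v. 1 + n_rooted v u)\<^sup>2"
    using pow2_sum_le_prod_square[OF finite_nbrs] bound by blast
  ultimately show ?thesis
    using vertex_inequality_light_arith[OF n]
    unfolding alpha_bar_v_eq_sum[OF v] alpha_v_eq_prod[OF v] card_V_eq_Suc_sum[OF v] by simp
qed

end

theorem mainTheorem10:
  fixes V :: "'a set" and E :: "'a set set"
  assumes "in_T3 V E"
    and "card V \<ge> 30"
  shows "(\<exists>e\<in>E. 2 * alpha_e V E e \<ge> card V * alpha_bar_e V E e)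
         \<or> (\<exists>v\<in>V. internal E v \<and> 2 * alpha_v V E v \<ge> card V * alpha_bar_v V E v)"
proof -
  interpret t3_tree V E
    using assms(1) unfolding in_T3_def by unfold_locales blast+
  obtain v where v: "v \<in> V" "internal E v"
    and max: "\<forall>w\<in>V. internal E w \<longrightarrow> alpha_v V E w \<le> alpha_v V E v"
    using ex_internal_maximising_alpha_v assms(1) unfolding in_T3_def by blast
  have "card V * alpha_bar_v V E v \<le> 2 * alpha_v V E v"
  proof (cases "\<exists>u\<in>nbrs v. 2 * card V \<le> n_rooted v u")
    case True
    then obtain u where "{v, u} \<in> E" "2 * card V \<le> n_rooted v u" by (auto simp: nbrs_edge)
    then show ?thesis using max vertex_inequality_heavy_branch by blast
  next
    case False
    then show ?thesis using vertex_inequality_light_branches[OF assms(2) v(1)] by (simp add: not_le)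
  qed
  then show ?thesis using v by auto
qed

end
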